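(* Let $E,m\ge1$, let $x,x'\in\mathbb{F}^E_m\cap[0,1]$ satisfy $0<x-x'<1$ (exact real subtraction), and let $\ell\ge1$ be an integer. Let $\beta=(n_1,n_2,n_{\mathrm{hi}},n_{\mathrm{lo}},b_1,b_2,g_{\mathrm{hi}},g_{\mathrm{lo}})=\textsc{Pre1}(x,x')$ and $b'=\textsc{ExtractBit}(\beta,\ell)$, with the procedures defined in the context. Then $0\le g_{\mathrm{hi}}<2^{n_{\mathrm{hi}}}$, $0\le g_{\mathrm{lo}}<2^{n_{\mathrm{lo}}}$, and $x-x'=(0.\,\underbrace{b_1\ldots b_1}_{n_1}\,[g_{\mathrm{hi}}]_{n_{\mathrm{hi}}}\,\underbrace{b_2\ldots b_2}_{n_2}\,[g_{\mathrm{lo}}]_{n_{\mathrm{lo}}})_2$, where $[g]_k$ denotes the $k$-digit binary representation of $g$ (with leading zeros); moreover $b'$ is the $\ell$-th digit after the binary point of the concise binary expansion of $x-x'$, and all intermediate values appearing in $\textsc{Pre1}$ and $\textsc{ExtractBit}$ are representable as $(1+E+m)$-bit signed integers.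
   Context: $\mathbb{F}^E_m$ is the IEEE-754 floating-point format with bit strings $s\,e_E\ldots e_1\,f_1\ldots f_m$, bias $b_E=2^{E-1}-1$, $e=(e_E\ldots e_1)_2$; finite nonnegative values are $(0.f_1\ldots f_m)_2\,2^{1-b_E}$ if $e=0$ and $(1.f_1\ldots f_m)_2\,2^{e-b_E}$ if $0<e<2^E-1$. A concise binary expansion does not end in infinitely many 1s. $\textsc{Pre1}(x,x')$: let $e,e'$ be the exponent fields of $x,x'$ and $f_i,f'_i$ their mantissa bits. Set $\hat e=e-(2^{E-1}-1)+\mathbf{1}[e=0]$, $\hat e'=e'-(2^{E-1}-1)+\mathbf{1}[e'=0]$, $f=(1f_1\ldots f_m)_2-\mathbf{1}[e=0]2^m$, $f'=(1f'_1\ldots f'_m)_2-\mathbf{1}[e'=0]2^m$, $d=\hat e-\hat e'$, $f'_{\mathrm{hi}}=\lfloor f'/2^{\min\{d,E+m\}}\rfloor$, $f'_{\mathrm{lo}}=f'\bmod 2^{\min\{d,m+1\}}$, $n_1=-\hat e-1+\mathbf{1}[x=1]$, $n_2=\max\{d-(m+1),0\}$, $n_{\mathrm{hi}}=m+1-\mathbf{1}[x=1]$, $n_{\mathrm{lo}}=\min\{d,m+1\}$, $b_1=0$, $b_2=\mathbf{1}[f'_{\mathrm{lo}}>0]$, $g_{\mathrm{hi}}=f-f'_{\mathrm{hi}}-b_2$, $g_{\mathrm{lo}}=b_2\,2^{n_{\mathrm{lo}}}-f'_{\mathrm{lo}}$; return $(n_1,n_2,n_{\mathrm{hi}},n_{\mathrm{lo}},b_1,b_2,g_{\mathrm{hi}},g_{\mathrm{lo}})$.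 $\textsc{ExtractBit}(\beta,\ell)$: if $\ell\le n_1$ return $b_1$; else if $\ell\le n_1+n_{\mathrm{hi}}$ return the $(\ell-n_1)$-th most significant digit of $[g_{\mathrm{hi}}]_{n_{\mathrm{hi}}}$; else if $\ell\le n_1+n_{\mathrm{hi}}+n_2$ return $b_2$; else if $\ell\le n_1+n_{\mathrm{hi}}+n_2+n_{\mathrm{lo}}$ return the $(\ell-n_1-n_{\mathrm{hi}}-n_2)$-th most significant digit of $[g_{\mathrm{lo}}]_{n_{\mathrm{lo}}}$; else return $0$. *)

theory Defs
  imports Complex_Main
begin

text \<open>A floating-point bit string s e_E..e_1 f_1..f_m is represented by the triple
  (s, e, f) of naturals: sign bit s, exponent field e = (e_E..e_1)_2 and
  mantissa field f = (f_1..f_m)_2.\<close>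

type_synonym fp = "nat \<times> nat \<times> nat"

definition bias :: "nat \<Rightarrow> int" where
  "bias E = 2 ^ (E - 1) - 1"

text \<open>Finite elements of F^E_m (exponent field not all ones).\<close>
definition is_float :: "nat \<Rightarrow> nat \<Rightarrow> fp \<Rightarrow> bool" where
  "is_float E m x = (case x of (s, e, f) \<Rightarrow> s \<le> 1 \<and> e < 2 ^ E - 1 \<and> f < 2 ^ m)"

definition fval :: "nat \<Rightarrow> nat \<Rightarrow> fp \<Rightarrow> real" where
  "fval E m x = (case x of (s, e, f) \<Rightarrow>
     (-1) ^ s * (if e = 0 then (real f / 2 ^ m) * 2 powi (1 - bias E)
                 else (1 + real f / 2 ^ m) * 2 powi (int e - bias E)))"

definition exp_hat :: "nat \<Rightarrow> fp \<Rightarrow> int" where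
  "exp_hat E x = (case x of (s, e, f) \<Rightarrow> int e - bias E + (if e = 0 then 1 else 0))"

text \<open>(1 f_1 .. f_m)_2 = 2^m + f\<close>
definition mant_raw :: "nat \<Rightarrow> fp \<Rightarrow> int" where
  "mant_raw m x = (case x of (s, e, f) \<Rightarrow> 2 ^ m + int f)"

definition mant :: "nat \<Rightarrow> fp \<Rightarrow> int" where
  "mant m x = (case x of (s, e, f) \<Rightarrow> mant_raw m x - (if e = 0 then 2 ^ m else 0))"

definition expfield :: "fp \<Rightarrow> int" where
  "expfield x = (case x of (s, e, f) \<Rightarrow> int e)"

type_synonym beta = "int \<times> int \<times> int \<times> int \<times> int \<times> int \<times> int \<times> int"

definition Pre1 :: "nat \<Rightarrow> nat \<Rightarrow> fp \<Rightarrow> fp \<Rightarrow> beta" where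
  "Pre1 E m x x' =
    (let eh = exp_hat E x; eh' = exp_hat E x';
         f = mant m x; f' = mant m x';
         d = eh - eh';
         fhi' = f' div 2 ^ nat (min d (int E + int m));
         flo' = f' mod 2 ^ nat (min d (int m + 1));
         one = (if fval E m x = 1 then 1 else 0 :: int);
         n1 = - eh - 1 + one;
         n2 = max (d - (int m + 1)) 0;
         nhi = int m + 1 - one;
         nlo = min d (int m + 1);
         b1 = 0;
         b2 = (if flo' > 0 then 1 else 0 :: int);
         ghi = f - fhi' - b2;
         glo = b2 * 2 ^ nat nlo - flo'
     in (n1, n2, nhi, nlo, b1, b2, ghi, glo))"

text \<open>Powers of two used only as shift/mask operands are not listed.\<close>
definition Pre1_trace :: "nat \<Rightarrow> nat \<Rightarrow> fp \<Rightarrow> fp \<Rightarrow> int list" where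
  "Pre1_trace E m x x' =
    (let eh = exp_hat E x; eh' = exp_hat E x';
         f = mant m x; f' = mant m x';
         d = eh - eh';
         fhi' = f' div 2 ^ nat (min d (int E + int m));
         flo' = f' mod 2 ^ nat (min d (int m + 1));
         one = (if fval E m x = 1 then 1 else 0 :: int);
         n1 = - eh - 1 + one;
         n2 = max (d - (int m + 1)) 0;
         nhi = int m + 1 - one;
         nlo = min d (int m + 1);
         b1 = 0;
         b2 = (if flo' > 0 then 1 else 0 :: int);
         ghi = f - fhi' - b2;
         glo = b2 * 2 ^ nat nlo - flo'
     in [expfield x, expfield x', bias E, eh, eh', mant_raw m x, mant_raw m x', f, f', d,
         min d (int E + int m), min d (int m + 1), fhi', flo', one,
         n1, n2, nhi, nlo, b1, b2, f - fhi', ghi, glo])"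

text \<open>The i-th most significant digit (1 \<le> i \<le> k) of the k-digit binary
  representation [g]_k of g.\<close>
definition kdigit :: "int \<Rightarrow> int \<Rightarrow> int \<Rightarrow> int" where
  "kdigit k g i = (g div 2 ^ nat (k - i)) mod 2"

definition ExtractBit :: "beta \<Rightarrow> int \<Rightarrow> int" where
  "ExtractBit \<beta> l = (case \<beta> of (n1, n2, nhi, nlo, b1, b2, ghi, glo) \<Rightarrow>
     if l \<le> n1 then b1
     else if l \<le> n1 + nhi then kdigit nhi ghi (l - n1)
     else if l \<le> n1 + nhi + n2 then b2
     else if l \<le> n1 + nhi + n2 + nlo then kdigit nlo glo (l - n1 - nhi - n2)
     else 0)"

definition ExtractBit_trace :: "beta \<Rightarrow> int \<Rightarrow> int list" where
  "ExtractBit_trace \<beta> l = (case \<beta> of (n1, n2, nhi, nlo, b1, b2, ghi, glo) \<Rightarrow>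
     [n1 + nhi, n1 + nhi + n2, n1 + nhi + n2 + nlo]
     @ (if l \<le> n1 then []
        else if l \<le> n1 + nhi then [l - n1]
        else if l \<le> n1 + nhi + n2 then []
        else if l \<le> n1 + nhi + n2 + nlo then [l - n1, l - n1 - nhi, l - n1 - nhi - n2]
        else [])
     @ [ExtractBit \<beta> l])"

text \<open>Value of (0. b1..b1 [ghi]_nhi b2..b2 [glo]_nlo)_2 with n1 copies of b1 and
  n2 copies of b2: each block is placed at its digit positions.\<close>
definition bin_val :: "beta \<Rightarrow> real" where
  "bin_val \<beta> = (case \<beta> of (n1, n2, nhi, nlo, b1, b2, ghi, glo) \<Rightarrow>
      (\<Sum>i\<in>{1..nat n1}. real_of_int b1 * 2 powi (- int i))
    + real_of_int ghi * 2 powi (- (n1 + nhi))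
    + (\<Sum>i\<in>{1..nat n2}. real_of_int b2 * 2 powi (- (n1 + nhi + int i)))
    + real_of_int glo * 2 powi (- (n1 + nhi + n2 + nlo)))"

definition concise_bin_exp :: "real \<Rightarrow> (nat \<Rightarrow> int) \<Rightarrow> bool" where
  "concise_bin_exp r d \<longleftrightarrow>
     (\<forall>i\<ge>1. d i \<in> {0, 1}) \<and>
     (\<lambda>i. real_of_int (d (Suc i)) / 2 ^ Suc i) sums r \<and>
     \<not> (\<exists>N. \<forall>i\<ge>N. d i = 1)"

definition representable_signed :: "nat \<Rightarrow> int \<Rightarrow> bool" where
  "representable_signed k v \<longleftrightarrow> - (2 ^ (k - 1)) \<le> v \<and> v < 2 ^ (k - 1)"

end

theory Submission
  imports Defs
begin

text \<open>
  Both x and x' are integer multiples of 2^(eh' - m), the unit in the last place of x', so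
  x - x' = R / 2^Q with Q = m - eh' and R = f 2^d - f' for the shift d = eh - eh'; the hypotheses
  give 0 < R < 2^Q.  Pre1 produces the binary digits of R without forming it: splitting
  f' = fhi' 2^d + flo' and borrowing b2 = [flo' > 0] from the high part gives
  R = ghi 2^d + (b2 2^d - flo'), whose low part consists of n2 copies of b2 followed by the
  nlo digits of glo.  Hence ExtractBit returns the l-th digit of R / 2^Q, which is
  floor (2^l (x - x')) mod 2, the l-th digit of the unique concise binary expansion.  Every
  intermediate value is bounded by the exponent range 2^E or the mantissa range 2^(m+1), whence
  the bit-width bounds.
\<close>

section \<open>Concise binary expansions\<close>

lemma floor_double_eq: "\<lfloor>2 * y\<rfloor> = 2 * \<lfloor>y\<rfloor> + \<lfloor>2 * y\<rfloor> mod 2" for y :: real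
proof -
  have lower: "2 * \<lfloor>y\<rfloor> \<le> \<lfloor>2 * y\<rfloor>" by (simp add: le_floor_iff)
  have upper: "\<lfloor>2 * y\<rfloor> < 2 * \<lfloor>y\<rfloor> + 2"
    unfolding floor_less_iff using floor_correct[of y] by linarith
  from lower upper show ?thesis by presburger
qed

lemma concise_bin_exp_bounds:
  assumes "concise_bin_exp r d"
  shows "0 \<le> r" and "r < 1"
proof -
  define t where "t i = real_of_int (d (Suc i)) / 2 ^ Suc i" for i
  have digit: "d i = 0 \<or> d i = 1" if "1 \<le> i" for i
    using assms that unfolding concise_bin_exp_def by auto
  have t_sums: "t sums r" using assms unfolding concise_bin_exp_def t_def by auto
  have t_nonneg: "0 \<le> t i" for i using digit[of "Suc i"] unfolding t_def by auto
  show "0 \<le> r" using t_sums t_nonneg by (metis sums_le sums_zero)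
  obtain j where j: "j \<ge> 1" "d j \<noteq> 1" using assms unfolding concise_bin_exp_def by auto
  define g where "g i = (1/2::real) ^ Suc i - t i" for i
  have g_sums: "g sums (1 - r)" unfolding g_def by (rule sums_diff[OF power_half_series t_sums])
  have "0 \<le> g i" for i using digit[of "Suc i"] unfolding g_def t_def by (auto simp: power_divide)
  moreover have "0 < g (j - 1)" using j digit[of j] unfolding g_def t_def by (simp add: power_divide)
  ultimately have "0 < suminf g" by (intro suminf_pos2[OF sums_summable[OF g_sums]])
  then show "r < 1" using g_sums sums_unique by fastforce
qed

lemma concise_bin_exp_shift:
  assumes "concise_bin_exp r d"
  shows "concise_bin_exp (2^k * r - of_int (\<Sum>i<k. d (Suc i) * 2 ^ (k - Suc i))) (\<lambda>i. d (i + k))"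
proof -
  define t where "t i = real_of_int (d (Suc i)) / 2 ^ Suc i" for i
  have "t sums r" using assms unfolding concise_bin_exp_def t_def by auto
  then have "(\<lambda>i. 2^k * t (i + k)) sums (2^k * (r - sum t {..<k}))"
    by (intro sums_mult sums_split_initial_segment)
  moreover have "2^k * t (i + k) = real_of_int (d (Suc i + k)) / 2 ^ Suc i" for i
    unfolding t_def by (simp add: power_add)
  moreover have "2^k * sum t {..<k} = of_int (\<Sum>i<k. d (Suc i) * 2 ^ (k - Suc i))"
    unfolding sum_distrib_left of_int_sum
  proof (rule sum.cong[OF refl])
    fix i assume "i \<in> {..<k}"
    then have "(2::real)^k = 2^(k - Suc i) * 2^Suc i"
      by (metis power_add Suc_leI le_add_diff_inverse2 lessThan_iff)
    then show "2^k * t i = of_int (d (Suc i) * 2 ^ (k - Suc i))" unfolding t_def by simp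
  qed
  ultimately have "(\<lambda>i. real_of_int (d (Suc i + k)) / 2 ^ Suc i) sums
      (2^k * r - of_int (\<Sum>i<k. d (Suc i) * 2 ^ (k - Suc i)))"
    by (simp add: right_diff_distrib)
  moreover have "\<forall>i\<ge>1. d (i + k) \<in> {0, 1}"
    using assms unfolding concise_bin_exp_def by simp
  moreover have "\<not> (\<exists>N. \<forall>i\<ge>N. d (i + k) = 1)"
  proof
    assume "\<exists>N. \<forall>i\<ge>N. d (i + k) = 1"
    then obtain N where N: "\<And>i. i \<ge> N \<Longrightarrow> d (i + k) = 1" by blast
    have "d i = 1" if "i \<ge> N + k" for i
      using N[of "i - k"] that by simp
    then show False using assms unfolding concise_bin_exp_def by blast
  qed
  ultimately show ?thesis unfolding concise_bin_exp_def by simp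
qed

lemma concise_bin_exp_digit:
  assumes "concise_bin_exp r d" and "1 \<le> k"
  shows "d k = \<lfloor>2^k * r\<rfloor> mod 2"
proof -
  define S where "S = (\<Sum>i<k. d (Suc i) * 2 ^ (k - Suc i))"
  have "0 \<le> 2^k * r - of_int S" and "2^k * r - of_int S < 1"
    using concise_bin_exp_bounds[OF concise_bin_exp_shift[OF assms(1)]] unfolding S_def by auto
  then have floor_eq: "\<lfloor>2^k * r\<rfloor> = S" by (simp add: floor_eq_iff)
  obtain k0 where k0: "k = Suc k0" using assms(2) by (cases k) auto
  have "even (\<Sum>i<k0. d (Suc i) * 2 ^ (k - Suc i))"
    unfolding k0 by (intro dvd_sum) (simp add: Suc_diff_Suc)
  then have S_mod: "S mod 2 = d k mod 2" unfolding S_def k0 by (auto elim!: evenE)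
  have "d k \<in> {0, 1}" using assms unfolding concise_bin_exp_def by blast
  then have "d k mod 2 = d k" by auto
  then show ?thesis using floor_eq S_mod by simp
qed

lemma sum_floor_digits:
  fixes r :: real
  assumes "0 \<le> r" and "r < 1"
  shows "(\<Sum>i<n. real_of_int (\<lfloor>2 ^ Suc i * r\<rfloor> mod 2) / 2 ^ Suc i) = \<lfloor>2^n * r\<rfloor> / 2^n"
proof (induction n)
  case 0
  then show ?case using assms by (simp add: floor_eq_iff)
next
  case (Suc n)
  have "\<lfloor>2 ^ Suc n * r\<rfloor> = 2 * \<lfloor>2^n * r\<rfloor> + \<lfloor>2 ^ Suc n * r\<rfloor> mod 2"
    using floor_double_eq[of "2^n * r"] by (simp add: mult.assoc)
  then show ?case using Suc by (simp add: field_simps)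
qed

text \<open>If all digits from N on were 1, the gap between 2^n r and its next integer would double at
  every step beyond N, yet it never exceeds 1.\<close>
lemma floor_digits_not_eventually_one: "\<not> (\<exists>N. \<forall>i\<ge>N. \<lfloor>2^i * r\<rfloor> mod 2 = 1)" for r :: real
proof
  assume "\<exists>N. \<forall>i\<ge>N. \<lfloor>2^i * r\<rfloor> mod 2 = 1"
  then obtain N where N: "\<And>i. i \<ge> N \<Longrightarrow> \<lfloor>2^i * r\<rfloor> mod 2 = 1" by blast
  define a where "a n = \<lfloor>2^n * r\<rfloor> + 1" for n
  have a_step: "a (N + j) = 2^j * a N" for j
  proof (induction j)
    case (Suc j)
    have "\<lfloor>2 ^ Suc (N + j) * r\<rfloor> = 2 * \<lfloor>2 ^ (N + j) * r\<rfloor> + 1"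
      using floor_double_eq[of "2 ^ (N + j) * r"] N[of "Suc (N + j)"] by (simp add: mult.assoc)
    then show ?case using Suc unfolding a_def by simp
  qed simp
  define c where "c = a N - 2^N * r"
  have "0 < c" unfolding c_def a_def by linarith
  obtain j :: nat where "1 / c < 2^j" using real_arch_pow[of 2 "1 / c"] by auto
  then have "1 < 2^j * c" using \<open>0 < c\<close> by (simp add: field_simps)
  moreover have "of_int (a (N + j)) - 2^(N + j) * r \<le> 1" unfolding a_def by linarith
  ultimately show False unfolding a_step c_def by (simp add: power_add algebra_simps)
qed

lemma concise_bin_exp_floor_digits:
  assumes "0 \<le> r" and "r < 1"
  shows "concise_bin_exp r (\<lambda>k. \<lfloor>2^k * r\<rfloor> mod 2)"
proof -
  have "(\<lambda>n. \<lfloor>2^n * r\<rfloor> / 2^n) \<longlonglongrightarrow> r"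
  proof (rule real_tendsto_sandwich)
    have "(\<lambda>n. r - (1/2::real)^n) \<longlonglongrightarrow> r - 0"
      by (intro tendsto_intros) simp
    then show "(\<lambda>n. r - (1/2::real)^n) \<longlonglongrightarrow> r" by simp
    have "r - (1/2)^n \<le> \<lfloor>2^n * r\<rfloor> / (2::real)^n" for n
    proof -
      have "(2^n * r - 1) / 2^n \<le> \<lfloor>2^n * r\<rfloor> / (2::real)^n"
        by (rule divide_right_mono) (linarith, simp)
      then show ?thesis by (simp add: field_simps power_divide)
    qed
    then show "\<forall>\<^sub>F n in sequentially. r - (1/2)^n \<le> \<lfloor>2^n * r\<rfloor> / (2::real)^n" by simp
    show "\<forall>\<^sub>F n in sequentially. \<lfloor>2^n * r\<rfloor> / (2::real)^n \<le> r"
      by (simp add: field_simps)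
  qed simp
  then have "(\<lambda>i. real_of_int (\<lfloor>2 ^ Suc i * r\<rfloor> mod 2) / 2 ^ Suc i) sums r"
    unfolding sums_def sum_floor_digits[OF assms] .
  then show ?thesis
    unfolding concise_bin_exp_def using floor_digits_not_eventually_one[of r] by auto
qed

section \<open>Digit strings\<close>

lemma digit_of_shifted_sum:
  fixes A B :: int and k j :: nat
  assumes "0 \<le> B" and "B < 2^k"
  shows "(A * 2^k + B) div 2^j mod 2 = (if k \<le> j then A div 2^(j - k) mod 2 else B div 2^j mod 2)"
proof (cases "k \<le> j")
  case True
  have "(2::int)^j = 2^k * 2^(j - k)" using True by (simp flip: power_add)
  then have "(A * 2^k + B) div 2^j = (A * 2^k + B) div 2^k div 2^(j - k)"
    by (simp add: zdiv_zmult2_eq)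
  also have "(A * 2^k + B) div 2^k = A" using assms by simp
  finally show ?thesis using True by simp
next
  case False
  have "(2::int)^k = 2^(k - j) * 2^j" using False by (simp flip: power_add)
  then have "(A * 2^k + B) div 2^j = A * 2^(k - j) + B div 2^j"
    by (simp flip: mult.assoc)
  moreover have "A * 2^(k - j) mod 2 = 0" using False by simp
  ultimately show ?thesis using False by (metis add_0 mod_add_left_eq)
qed

lemma digit_of_power_minus_one:
  assumes "j < n"
  shows "((2::int)^n - 1) div 2^j mod 2 = 1"
  using assms by (metis even_decr_exp_div_exp_iff' not_le odd_iff_mod_2_eq_one)

lemma floor_power_times_fraction:
  fixes R :: int and k Q :: nat
  shows "\<lfloor>2^k * (of_int R / 2^Q :: real)\<rfloor> = (if k \<le> Q then R div 2^(Q - k) else R * 2^(k - Q))"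
proof (cases "k \<le> Q")
  case True
  then have "2^k * (of_int R / 2^Q :: real) = of_int R / of_int (2^(Q - k))"
    by (simp add: field_simps flip: power_add)
  then show ?thesis using True by (simp only: floor_divide_of_int_eq) simp
next
  case False
  then have "2^k * (of_int R / 2^Q :: real) = of_int (R * 2^(k - Q))"
    by (simp add: field_simps flip: power_add)
  then show ?thesis using False by (simp only: floor_of_int) simp
qed

lemma quotient_bounds:
  fixes g w b c :: int
  assumes "0 \<le> w" and "w < b" and "0 \<le> g * b + w" and "g * b + w < c * b"
  shows "0 \<le> g" and "g < c"
proof -
  show "0 \<le> g"
  proof (rule ccontr)
    assume "\<not> 0 \<le> g"
    then have "g * b \<le> -1 * b" using assms(1,2) by (intro mult_right_mono) auto
    then show False using assms by linarith
  qed
  show "g < c" using assms by (smt (verit, best) mult_less_cancel_right_pos)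
qed

text \<open>The integer ([ghi]_nhi b2..b2 [glo]_nlo)_2 with n2 copies of b2.  For b1 = 0 the value
  bin_val is this integer divided by 2^(n1 + nhi + n2 + nlo).\<close>
definition bin_int :: "beta \<Rightarrow> int" where
  "bin_int \<beta> = (case \<beta> of (n1, n2, nhi, nlo, b1, b2, ghi, glo) \<Rightarrow>
     (ghi * 2 ^ nat n2 + b2 * (2 ^ nat n2 - 1)) * 2 ^ nat nlo + glo)"

lemma two_powi_neg: "(2::real) powi (- int a) = 1 / 2^a"
  by (simp add: power_int_minus_divide)

lemma sum_inverse_two_power: "(\<Sum>i\<in>{1..n}. 1 / (2::real)^(a + i)) = 1 / 2^a - 1 / 2^(a + n)"
proof (induction n)
  case (Suc n)
  have "(\<Sum>i\<in>{1..Suc n}. 1 / (2::real)^(a + i)) = 1 / 2^a - 1 / 2^(a + n) + 1 / 2^(a + Suc n)"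
    unfolding sum.cl_ivl_Suc Suc.IH by simp
  then show ?case by (simp add: field_simps)
qed simp

lemma bin_val_eq_bin_int:
  assumes "0 \<le> n1 + nhi" and "0 \<le> n2" and "0 \<le> nlo" and "int Q = n1 + nhi + n2 + nlo"
  shows "bin_val (n1, n2, nhi, nlo, 0, b2, ghi, glo) =
    of_int (bin_int (n1, n2, nhi, nlo, 0, b2, ghi, glo)) / 2^Q"
proof -
  define P where "P = nat (n1 + nhi)"
  have P: "n1 + nhi = int P" and PQ: "int P + n2 + nlo = int Q"
    using assms unfolding P_def by linarith+
  have "bin_val (n1, n2, nhi, nlo, 0, b2, ghi, glo) =
      ghi / 2^P + b2 * (\<Sum>i\<in>{1..nat n2}. 1 / 2^(P + i)) + glo / 2^Q"
    unfolding bin_val_def prod.case P PQ sum_distrib_left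
    by (simp only: two_powi_neg of_nat_add[symmetric]) simp
  also have "\<dots> = of_int (bin_int (n1, n2, nhi, nlo, 0, b2, ghi, glo)) / 2^Q"
  proof -
    have "Q = P + nat n2 + nat nlo" using PQ assms by linarith
    then show ?thesis unfolding sum_inverse_two_power bin_int_def by (simp add: field_simps power_add)
  qed
  finally show ?thesis .
qed

lemma bin_int_digit:
  assumes "b2 = 0 \<or> b2 = 1" and "0 \<le> glo" and "glo < 2 ^ nat nlo"
  shows "bin_int (n1, n2, nhi, nlo, b1, b2, ghi, glo) div 2^t mod 2 =
    (if t < nat nlo then glo div 2^t mod 2
     else if t < nat nlo + nat n2 then b2
     else ghi div 2^(t - nat nlo - nat n2) mod 2)"
proof -
  have ones: "0 \<le> b2 * (2^nat n2 - 1)" "b2 * (2^nat n2 - 1) < 2^nat n2" using assms(1) by auto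
  have "b2 * (2^nat n2 - 1) div 2^j mod 2 = b2" if "j < nat n2" for j
    using assms(1) digit_of_power_minus_one[OF that] by auto
  then have "(ghi * 2^nat n2 + b2 * (2^nat n2 - 1)) div 2^j mod 2 =
      (if nat n2 \<le> j then ghi div 2^(j - nat n2) mod 2 else b2)" for j
    unfolding digit_of_shifted_sum[OF ones] by simp
  then show ?thesis
    unfolding bin_int_def prod.case digit_of_shifted_sum[OF assms(2,3)] by (auto simp: diff_diff_add)
qed

lemma ExtractBit_eq_bin_int_digit:
  fixes l :: int
  assumes "0 \<le> nhi" and "0 \<le> n2" and "0 \<le> nlo" and "b2 = 0 \<or> b2 = 1"
    and "0 \<le> ghi" and "ghi < 2 ^ nat nhi" and "0 \<le> glo" and "glo < 2 ^ nat nlo"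
    and Q: "int Q = n1 + nhi + n2 + nlo" and "1 \<le> l" and "l \<le> int Q"
  shows "ExtractBit (n1, n2, nhi, nlo, 0, b2, ghi, glo) l =
    bin_int (n1, n2, nhi, nlo, 0, b2, ghi, glo) div 2 ^ (Q - nat l) mod 2"
proof -
  define t where "t = Q - nat l"
  have t: "int t = int Q - l" using assms unfolding t_def by linarith
  consider "n1 + nhi + n2 < l" | "n1 + nhi < l" "l \<le> n1 + nhi + n2"
    | "n1 < l" "l \<le> n1 + nhi" | "l \<le> n1" by linarith
  then have "ExtractBit (n1, n2, nhi, nlo, 0, b2, ghi, glo) l =
      (if t < nat nlo then glo div 2^t mod 2
       else if t < nat nlo + nat n2 then b2
       else ghi div 2^(t - nat nlo - nat n2) mod 2)"
  proof cases
    case 1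
    moreover have "t = nat (nlo - (l - n1 - nhi - n2))" using t Q by linarith
    ultimately show ?thesis using assms t unfolding ExtractBit_def kdigit_def by auto
  next
    case 2
    then show ?thesis using assms t unfolding ExtractBit_def by auto
  next
    case 3
    moreover have "t - nat nlo - nat n2 = nat (nhi - (l - n1))" using 3 t Q assms by linarith
    ultimately show ?thesis using assms t unfolding ExtractBit_def kdigit_def by auto
  next
    case 4
    have "(2::int) ^ nat nhi \<le> 2 ^ (t - nat nlo - nat n2)"
      using 4 t Q assms by (intro power_increasing) linarith+
    then have "ghi < 2 ^ (t - nat nlo - nat n2)" using assms(6) by linarith
    then have "ghi div 2 ^ (t - nat nlo - nat n2) = 0" using assms(5) by simp
    then show ?thesis using 4 assms t unfolding ExtractBit_def by auto
  qed
  also have "\<dots> = bin_int (n1, n2, nhi, nlo, 0, b2, ghi, glo) div 2 ^ t mod 2"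
    using assms by (intro bin_int_digit[symmetric])
  finally show ?thesis unfolding t_def .
qed

lemma ExtractBit_eq_digit:
  fixes l :: int
  assumes "0 \<le> nhi" and "0 \<le> n2" and "0 \<le> nlo" and "b2 = 0 \<or> b2 = 1"
    and "0 \<le> ghi" and "ghi < 2 ^ nat nhi" and "0 \<le> glo" and "glo < 2 ^ nat nlo"
    and "int Q = n1 + nhi + n2 + nlo" and "1 \<le> l"
  shows "ExtractBit (n1, n2, nhi, nlo, 0, b2, ghi, glo) l =
    \<lfloor>2 ^ nat l * (of_int (bin_int (n1, n2, nhi, nlo, 0, b2, ghi, glo)) / 2^Q :: real)\<rfloor> mod 2"
proof (cases "l \<le> int Q")
  case True
  then show ?thesis
    using ExtractBit_eq_bin_int_digit[OF assms True] unfolding floor_power_times_fraction by simp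
next
  case False
  then have "ExtractBit (n1, n2, nhi, nlo, 0, b2, ghi, glo) l = 0"
    using assms unfolding ExtractBit_def by auto
  moreover have "\<not> nat l \<le> Q" using False by linarith
  ultimately show ?thesis unfolding floor_power_times_fraction by simp
qed

lemma ExtractBit_is_bit:
  assumes "b1 = 0 \<or> b1 = 1" and "b2 = 0 \<or> b2 = 1"
  shows "ExtractBit (n1, n2, nhi, nlo, b1, b2, ghi, glo) l = 0 \<or>
    ExtractBit (n1, n2, nhi, nlo, b1, b2, ghi, glo) l = 1"
  using assms unfolding ExtractBit_def kdigit_def by (auto simp: mod2_eq_if)

section \<open>Nonnegative floating-point numbers\<close>

lemma bias_nonneg: "0 \<le> bias E"
  unfolding bias_def by simp

lemma two_power_eq_bias: "1 \<le> E \<Longrightarrow> (2::int) ^ E = 2 * bias E + 2"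
  unfolding bias_def by (cases E) simp_all

lemma two_power_add_le:
  assumes "1 \<le> E" and "1 \<le> m"
  shows "2 ^ E + 2 ^ m \<le> (2::int) ^ (E + m)"
proof -
  have "(2::int) ^ 1 \<le> 2 ^ E" and "(2::int) ^ 1 \<le> 2 ^ m"
    using assms by (intro power_increasing; simp)+
  then have "1 * 1 \<le> ((2::int) ^ E - 1) * (2 ^ m - 1)"
    by (intro mult_mono) simp_all
  then show ?thesis unfolding power_add by (simp add: algebra_simps)
qed

lemma int_less_two_power: "int m < 2 ^ m"
  using less_exp[of m] by (metis of_nat_less_iff of_nat_numeral of_nat_power)

lemma expfield_bounds:
  assumes "is_float E m x"
  shows "0 \<le> expfield x \<and> expfield x < 2^E - 1"
proof -
  obtain s e f where x: "x = (s, e, f)" by (cases x)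
  have "e < 2^E - 1" using assms unfolding x is_float_def by simp
  then have "int e < int (2^E - 1)" by (simp only: of_nat_less_iff)
  moreover have "int (2^E - 1) = 2^E - 1" by (simp add: of_nat_diff)
  ultimately show ?thesis unfolding x expfield_def by simp
qed

lemma mant_raw_bounds: "is_float E m x \<Longrightarrow> 2^m \<le> mant_raw m x \<and> mant_raw m x < 2^(m+1)"
  unfolding is_float_def mant_raw_def by (auto split: prod.splits)

lemma mant_nonneg: "0 \<le> mant m x"
  unfolding mant_def mant_raw_def by (auto split: prod.splits)

lemma mant_less:
  assumes "is_float E m x"
  shows "mant m x < 2^(m+1)"
proof -
  have "mant m x \<le> mant_raw m x" unfolding mant_def by (auto split: prod.splits)
  then show ?thesis using mant_raw_bounds[OF assms] by linarith
qed

lemma mant_ge_if_normal: "expfield x \<noteq> 0 \<Longrightarrow> 2^m \<le> mant m x"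
  unfolding expfield_def mant_def mant_raw_def by (auto split: prod.splits)

lemma exp_hat_ge: "1 - bias E \<le> exp_hat E x"
  unfolding exp_hat_def by (auto split: prod.splits)

lemma exp_hat_if_subnormal: "expfield x = 0 \<Longrightarrow> exp_hat E x = 1 - bias E"
  unfolding expfield_def exp_hat_def by (auto split: prod.splits)

text \<open>Sign bit 1 is compatible with a nonnegative value only for a zero, so the sign bit of a
  nonnegative float can be ignored.\<close>
lemma fval_eq_mant:
  assumes "is_float E m x" and "0 \<le> fval E m x"
  shows "fval E m x = of_int (mant m x) / 2^m * 2 powi exp_hat E x"
proof -
  obtain s e f where x: "x = (s, e, f)" by (cases x)
  define v where "v = of_int (mant m x) / 2^m * (2::real) powi exp_hat E x"
  have "fval E m x = (-1)^s * v"
    unfolding v_def x fval_def mant_def mant_raw_def exp_hat_def by (simp add: field_simps)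
  moreover have "0 \<le> v" unfolding v_def using mant_nonneg[of m x] by simp
  moreover have "s \<le> 1" using assms(1) unfolding x is_float_def by simp
  ultimately show ?thesis using assms(2) unfolding v_def[symmetric] by (cases s) auto
qed

lemma fval_ge_if_normal:
  assumes "is_float E m x" and "0 \<le> fval E m x" and "expfield x \<noteq> 0"
  shows "2 powi exp_hat E x \<le> fval E m x"
proof -
  have "(2::real)^m \<le> of_int (mant m x)"
    using mant_ge_if_normal[OF assms(3)] by (metis of_int_le_iff of_int_numeral of_int_power)
  then have "1 * 2 powi exp_hat E x \<le> of_int (mant m x) / (2::real)^m * 2 powi exp_hat E x"
    by (intro mult_right_mono) simp_all
  then show ?thesis using fval_eq_mant[OF assms(1,2)] by simp
qed

lemma fval_less:
  assumes "is_float E m x" and "0 \<le> fval E m x"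
  shows "fval E m x < 2 powi (exp_hat E x + 1)"
proof -
  have "of_int (mant m x) < (2::real)^(m+1)"
    using mant_less[OF assms(1)] by (metis of_int_less_iff of_int_numeral of_int_power)
  then have "of_int (mant m x) / (2::real)^m * 2 powi exp_hat E x < 2 * 2 powi exp_hat E x"
    by (intro mult_strict_right_mono) (simp_all add: field_simps)
  then show ?thesis using fval_eq_mant[OF assms] by (simp add: power_int_add_1')
qed

lemma exp_hat_le_one:
  assumes "is_float E m x" and "0 \<le> fval E m x" and "fval E m x \<le> 1"
  shows "exp_hat E x \<le> 1"
proof (cases "expfield x = 0")
  case True
  then show ?thesis using exp_hat_if_subnormal bias_nonneg by simp
next
  case False
  then have "(2::real) powi exp_hat E x \<le> 2 powi 1"
    using fval_ge_if_normal[OF assms(1,2)] assms(3) by simp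
  then show ?thesis using power_int_le_imp_le_exp[of "2::real" "exp_hat E x" 1] by simp
qed

lemma exp_hat_mono:
  assumes "is_float E m x" and "0 \<le> fval E m x" and "is_float E m x'" and "0 \<le> fval E m x'"
    and "fval E m x' < fval E m x"
  shows "exp_hat E x' \<le> exp_hat E x"
proof (cases "expfield x' = 0")
  case True
  then show ?thesis using exp_hat_if_subnormal exp_hat_ge by simp
next
  case False
  have "(2::real) powi exp_hat E x' < 2 powi (exp_hat E x + 1)"
    using fval_ge_if_normal[OF assms(3,4) False] fval_less[OF assms(1,2)] assms(5) by linarith
  then show ?thesis by (metis power_int_increasing not_le one_le_numeral zless_imp_add1_zle)
qed

section \<open>The procedure Pre1\<close>

locale pre1_setting =
  fixes E m :: nat and x x' :: fp
  assumes E_pos: "1 \<le> E" and m_pos: "1 \<le> m"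
    and float_x: "is_float E m x" and float_x': "is_float E m x'"
    and x'_nonneg: "0 \<le> fval E m x'" and x_le_one: "fval E m x \<le> 1"
    and x'_less_x: "fval E m x' < fval E m x"
    and diff_less_one: "fval E m x - fval E m x' < 1"
begin

definition eh :: int where "eh = exp_hat E x"
definition eh' :: int where "eh' = exp_hat E x'"
definition f :: int where "f = mant m x"
definition f' :: int where "f' = mant m x'"
definition d :: int where "d = eh - eh'"
definition fhi' :: int where "fhi' = f' div 2 ^ nat (min d (int E + int m))"
definition flo' :: int where "flo' = f' mod 2 ^ nat (min d (int m + 1))"
definition one :: int where "one = (if fval E m x = 1 then 1 else 0)"
definition n1 :: int where "n1 = - eh - 1 + one"
definition n2 :: int where "n2 = max (d - (int m + 1)) 0"
definition nhi :: int where "nhi = int m + 1 - one"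
definition nlo :: int where "nlo = min d (int m + 1)"
definition b2 :: int where "b2 = (if flo' > 0 then 1 else 0)"
definition ghi :: int where "ghi = f - fhi' - b2"
definition glo :: int where "glo = b2 * 2 ^ nat nlo - flo'"

definition Q :: nat where "Q = nat (int m - eh')"

lemma Pre1_eq: "Pre1 E m x x' = (n1, n2, nhi, nlo, 0, b2, ghi, glo)"
  unfolding Pre1_def Let_def eh_def eh'_def f_def f'_def d_def fhi'_def flo'_def one_def
    n1_def n2_def nhi_def nlo_def b2_def ghi_def glo_def
  by simp

lemma Pre1_trace_eq:
  "Pre1_trace E m x x' = [expfield x, expfield x', bias E, eh, eh', mant_raw m x, mant_raw m x',
     f, f', d, min d (int E + int m), min d (int m + 1), fhi', flo', one,
     n1, n2, nhi, nlo, 0, b2, f - fhi', ghi, glo]"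
  unfolding Pre1_trace_def Let_def eh_def eh'_def f_def f'_def d_def fhi'_def flo'_def one_def
    n1_def n2_def nhi_def nlo_def b2_def ghi_def glo_def
  by simp

lemma x_nonneg: "0 \<le> fval E m x"
  using x'_nonneg x'_less_x by linarith

lemma exponent_bounds: "1 - bias E \<le> eh'" "eh' \<le> eh" "eh \<le> 1"
  unfolding eh_def eh'_def
  using exp_hat_ge exp_hat_mono[OF float_x x_nonneg float_x' x'_nonneg x'_less_x]
    exp_hat_le_one[OF float_x x_nonneg x_le_one] by auto

lemma d_nonneg: "0 \<le> d"
  unfolding d_def using exponent_bounds by simp

lemma one_cases: "one = 0 \<or> one = 1"
  unfolding one_def by simp

lemma b2_cases: "b2 = 0 \<or> b2 = 1"
  unfolding b2_def by simp

lemma mantissa_bounds: "0 \<le> f" "f < 2^(m+1)" "0 \<le> f'" "f' < 2^(m+1)"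
  unfolding f_def f'_def using mant_nonneg mant_less float_x float_x' by auto

lemma Q_eq: "int Q = int m - eh'"
  unfolding Q_def using exponent_bounds m_pos by simp

lemma lengths_nonneg: "0 \<le> n1 + nhi" "0 \<le> n2" "0 \<le> nhi" "0 \<le> nlo"
  unfolding n1_def n2_def nhi_def nlo_def using exponent_bounds d_nonneg m_pos one_cases by auto

lemma Q_eq_lengths: "int Q = n1 + nhi + n2 + nlo"
  unfolding Q_eq n1_def n2_def nhi_def nlo_def using d_nonneg d_def by auto

lemma Q_split: "Q = nat (n1 + nhi) + nat d"
  using Q_eq_lengths lengths_nonneg d_nonneg unfolding n2_def nlo_def by simp

lemma fvals_eq: "fval E m x = of_int (f * 2 ^ nat d) / 2^Q" "fval E m x' = of_int f' / 2^Q"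
proof -
  obtain D where D: "d = int D" using d_nonneg nonneg_int_cases by blast
  have "eh = int (D + m) - int Q" and "eh' = int m - int Q"
    using Q_eq D unfolding d_def by simp_all
  then have "(2::real) powi eh = 2^(D + m) / 2^Q" and "(2::real) powi eh' = 2^m / 2^Q"
    by (simp_all add: power_int_diff flip: of_nat_add)
  then show "fval E m x = of_int (f * 2 ^ nat d) / 2^Q" and "fval E m x' = of_int f' / 2^Q"
    using fval_eq_mant[OF float_x x_nonneg] fval_eq_mant[OF float_x' x'_nonneg]
    unfolding f_def f'_def eh_def eh'_def D by (simp_all add: power_add)
qed

text \<open>For d > m + 1 the shift exceeds the m + 1 digits of f', so fhi' = 0 and flo' = f'.\<close>
lemma f'_split: "f' = fhi' * 2 ^ nat d + flo'" "0 \<le> fhi'" "0 \<le> flo'" "flo' < 2 ^ nat nlo"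
proof -
  have "f' = fhi' * 2 ^ nat d + flo' \<and> 0 \<le> fhi' \<and> 0 \<le> flo' \<and> flo' < 2 ^ nat nlo"
  proof (cases "d \<le> int m + 1")
    case True
    then have "nat (min d (int E + int m)) = nat d" "nat (min d (int m + 1)) = nat d" "nlo = d"
      using E_pos unfolding nlo_def by auto
    then show ?thesis unfolding fhi'_def flo'_def
      using mantissa_bounds by (simp add: pos_imp_zdiv_nonneg_iff div_mult_mod_eq)
  next
    case False
    then have "nat (min d (int m + 1)) = m + 1" "nlo = int m + 1"
      and shift: "m + 1 \<le> nat (min d (int E + int m))"
      using E_pos unfolding nlo_def by auto
    moreover have "f' < 2 ^ nat (min d (int E + int m))"
      using mantissa_bounds power_increasing[OF shift, of "2::int"] by simp
    ultimately show ?thesis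
      unfolding fhi'_def flo'_def using mantissa_bounds by simp
  qed
  then show "f' = fhi' * 2 ^ nat d + flo'" "0 \<le> fhi'" "0 \<le> flo'" "flo' < 2 ^ nat nlo"
    by auto
qed

lemma glo_bounds: "0 \<le> glo" "glo < 2 ^ nat nlo"
  unfolding glo_def b2_def using f'_split by auto

lemma bin_int_Pre1: "bin_int (Pre1 E m x x') = f * 2 ^ nat d - f'"
proof -
  have "(2::int) ^ nat d = 2 ^ nat n2 * 2 ^ nat nlo"
    unfolding n2_def nlo_def using d_nonneg by (simp flip: power_add)
  then show ?thesis
    unfolding Pre1_eq bin_int_def prod.case ghi_def glo_def f'_split(1) by (simp add: algebra_simps)
qed

lemma diff_eq_bin_int: "fval E m x - fval E m x' = of_int (bin_int (Pre1 E m x x')) / 2^Q"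
  unfolding bin_int_Pre1 fvals_eq by (simp add: diff_divide_distrib)

lemma bin_int_bounds: "0 < bin_int (Pre1 E m x x')" "bin_int (Pre1 E m x x') < 2^Q"
proof -
  have "0 < of_int (bin_int (Pre1 E m x x')) / (2::real)^Q"
    and "of_int (bin_int (Pre1 E m x x')) / (2::real)^Q < 1"
    using x'_less_x diff_less_one unfolding diff_eq_bin_int[symmetric] by simp_all
  then have "0 < (of_int (bin_int (Pre1 E m x x')) :: real)"
    and "(of_int (bin_int (Pre1 E m x x')) :: real) < of_int (2^Q)"
    by (simp_all add: zero_less_divide_iff divide_less_eq)
  then show "0 < bin_int (Pre1 E m x x')" "bin_int (Pre1 E m x x') < 2^Q"
    by (simp_all only: of_int_less_iff of_int_0_less_iff)
qed

text \<open>The borrow b2 makes the remainder of the numerator modulo 2^d nonnegative, so ghi is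
  its quotient.\<close>
lemma bin_int_eq_ghi:
  "bin_int (Pre1 E m x x') = ghi * 2 ^ nat d + (b2 * 2 ^ nat d - flo')"
  "0 \<le> b2 * 2 ^ nat d - flo'" "b2 * 2 ^ nat d - flo' < 2 ^ nat d"
proof -
  show "bin_int (Pre1 E m x x') = ghi * 2 ^ nat d + (b2 * 2 ^ nat d - flo')"
    unfolding bin_int_Pre1 ghi_def f'_split(1) by (simp add: algebra_simps)
  have "(2::int) ^ nat nlo \<le> 2 ^ nat d" unfolding nlo_def by (intro power_increasing) auto
  then have "flo' < 2 ^ nat d" using f'_split(4) by linarith
  then show "0 \<le> b2 * 2 ^ nat d - flo'" "b2 * 2 ^ nat d - flo' < 2 ^ nat d"
    using f'_split unfolding b2_def by auto
qed

lemma ghi_nonneg_less: "0 \<le> ghi" "ghi < 2 ^ nat (n1 + nhi)"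
proof -
  have "(2::int) ^ Q = 2 ^ nat (n1 + nhi) * 2 ^ nat d"
    unfolding Q_split by (simp add: power_add)
  then show "0 \<le> ghi" "ghi < 2 ^ nat (n1 + nhi)"
    using bin_int_bounds bin_int_eq_ghi
      quotient_bounds[of "b2 * 2 ^ nat d - flo'" "2 ^ nat d" ghi "2 ^ nat (n1 + nhi)"]
    by auto
qed

lemma f_eq_if_one:
  assumes "fval E m x = 1"
  shows "f = 2 ^ nat (n1 + nhi)"
proof -
  have "of_int (f * 2 ^ nat d) = (of_int (2 ^ Q) :: real)"
    using assms fvals_eq(1) by (simp add: divide_eq_1_iff)
  then have "f * 2 ^ nat d = 2 ^ nat (n1 + nhi) * 2 ^ nat d"
    unfolding of_int_eq_iff Q_split by (simp add: power_add)
  then show ?thesis by simp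
qed

lemma ghi_bounds: "0 \<le> ghi" "ghi < 2 ^ nat nhi"
proof -
  show "0 \<le> ghi" by (rule ghi_nonneg_less(1))
  show "ghi < 2 ^ nat nhi"
  proof (cases "fval E m x = 1")
    case True
    then have "(2::int) ^ nat (n1 + nhi) < 2 ^ (m + 1)"
      using f_eq_if_one mantissa_bounds(2) by simp
    then have "nat (n1 + nhi) \<le> nat nhi"
      using True power_strict_increasing_iff[of "2::int" _ "m + 1"] unfolding nhi_def one_def by simp
    then have "(2::int) ^ nat (n1 + nhi) \<le> 2 ^ nat nhi" by (simp add: power_increasing)
    then show ?thesis using ghi_nonneg_less(2) by linarith
  next
    case False
    then have "nat nhi = m + 1" unfolding nhi_def one_def by (simp add: nat_add_distrib)
    moreover have "ghi \<le> f" unfolding ghi_def using f'_split(2) b2_cases by auto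
    ultimately show ?thesis using mantissa_bounds(2) by simp
  qed
qed

lemma diff_eq_bin_val: "fval E m x - fval E m x' = bin_val (Pre1 E m x x')"
  unfolding diff_eq_bin_int Pre1_eq
  using bin_val_eq_bin_int[OF lengths_nonneg(1,2,4) Q_eq_lengths] by simp

lemma ExtractBit_Pre1:
  assumes "1 \<le> l"
  shows "ExtractBit (Pre1 E m x x') l = \<lfloor>2 ^ nat l * (fval E m x - fval E m x')\<rfloor> mod 2"
  unfolding diff_eq_bin_int Pre1_eq
  by (rule ExtractBit_eq_digit[OF lengths_nonneg(3,2,4) b2_cases ghi_bounds glo_bounds
        Q_eq_lengths assms])

lemma exponent_sized_entries:
  "\<forall>v \<in> {expfield x, expfield x', bias E, eh, eh', d, min d (int E + int m), min d (int m + 1),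
     n1, n2}. - (bias E + 2) \<le> v \<and> v < 2 ^ E"
proof -
  have "0 \<le> n2" "n2 \<le> d" "0 \<le> min d (int E + int m)" "min d (int E + int m) \<le> d"
    "0 \<le> min d (int m + 1)" "min d (int m + 1) \<le> d"
    unfolding n2_def using d_nonneg by auto
  then show ?thesis
    using two_power_eq_bias[OF E_pos] bias_nonneg expfield_bounds[OF float_x]
      expfield_bounds[OF float_x'] exponent_bounds one_cases
    unfolding d_def n1_def by auto
qed

lemma mantissa_sized_entries:
  "\<forall>v \<in> {mant_raw m x, mant_raw m x', f, f', fhi', flo', one, nhi, nlo, 0, b2, f - fhi', ghi, glo}.
     0 \<le> v \<and> v < 2 ^ (m + 1)"
proof -
  have "0 \<le> nhi" "nhi \<le> int m + 1" "0 \<le> nlo" "nlo \<le> int m + 1"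
    unfolding nhi_def nlo_def using one_cases d_nonneg by auto
  moreover have "(2::int) ^ (m + 1) = 2 * 2 ^ m" by simp
  ultimately have "nhi < 2 ^ (m + 1)" "nlo < 2 ^ (m + 1)"
    using int_less_two_power[of m] by linarith+
  moreover have "glo < 2 ^ (m + 1)"
  proof -
    have "(2::int) ^ nat nlo \<le> 2 ^ (m + 1)" unfolding nlo_def by (intro power_increasing) auto
    then show ?thesis using glo_bounds by linarith
  qed
  moreover have "fhi' < 2 ^ (m + 1)" "flo' < 2 ^ (m + 1)"
  proof -
    have "fhi' * 1 \<le> fhi' * 2 ^ nat d" using f'_split(2) by (intro mult_left_mono) simp_all
    then show "fhi' < 2 ^ (m + 1)" "flo' < 2 ^ (m + 1)" using f'_split mantissa_bounds by linarith+
  qed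
  moreover have "0 \<le> f - fhi'" "f - fhi' < 2 ^ (m + 1)" "ghi < 2 ^ (m + 1)"
    using b2_cases ghi_bounds(1) f'_split(2) mantissa_bounds unfolding ghi_def by auto
  ultimately show ?thesis
    using mant_raw_bounds[OF float_x] mant_raw_bounds[OF float_x'] mantissa_bounds f'_split(2,3)
      lengths_nonneg(3,4) one_cases b2_cases ghi_bounds(1) glo_bounds(1) by auto
qed

lemma Pre1_trace_bounded:
  assumes "v \<in> set (Pre1_trace E m x x')"
  shows "- (2 ^ (E + m)) \<le> v" and "v < 2 ^ (E + m)"
proof -
  have bias_le: "bias E + 2 \<le> 2 ^ E" using two_power_eq_bias[OF E_pos] bias_nonneg[of E] by simp
  have powers_le: "(2::int) ^ E \<le> 2 ^ (E + m)" "(2::int) ^ (m + 1) \<le> 2 ^ (E + m)"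
    using E_pos by (intro power_increasing; simp)+
  consider "- (bias E + 2) \<le> v" "v < 2 ^ E" | "0 \<le> v" "v < 2 ^ (m + 1)"
    using assms exponent_sized_entries mantissa_sized_entries unfolding Pre1_trace_eq by auto
  then show "- (2 ^ (E + m)) \<le> v" "v < 2 ^ (E + m)" by (cases; use bias_le powers_le in linarith)+
qed

lemma ExtractBit_trace_entries:
  assumes "v \<in> set (ExtractBit_trace (Pre1 E m x x') l)"
  shows "0 \<le> v" and "v \<le> int Q + 2"
proof -
  have "- 2 \<le> n1" unfolding n1_def using exponent_bounds one_cases by auto
  moreover have "ExtractBit (Pre1 E m x x') l = 0 \<or> ExtractBit (Pre1 E m x x') l = 1"
    unfolding Pre1_eq using b2_cases by (intro ExtractBit_is_bit) simp_all
  ultimately show "0 \<le> v" "v \<le> int Q + 2"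
    using assms Q_eq_lengths lengths_nonneg unfolding ExtractBit_trace_def Pre1_eq
    by (auto split: if_splits)
qed

lemma ExtractBit_trace_bounded:
  assumes "v \<in> set (ExtractBit_trace (Pre1 E m x x') l)"
  shows "- (2 ^ (E + m)) \<le> v" and "v < 2 ^ (E + m)"
proof -
  have "int Q \<le> int m + bias E"
    using Q_eq exponent_bounds by linarith
  then have "0 \<le> v" "v < 2 ^ (E + m)"
    using ExtractBit_trace_entries[OF assms] int_less_two_power[of m] two_power_add_le[OF E_pos m_pos]
      two_power_eq_bias[OF E_pos] bias_nonneg[of E]
    by linarith+
  then show "- (2 ^ (E + m)) \<le> v" "v < 2 ^ (E + m)" by simp_all
qed

end

lemma representable_signed_iff:
  "representable_signed (1 + E + m) v \<longleftrightarrow> - (2 ^ (E + m)) \<le> v \<and> v < 2 ^ (E + m)"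
  unfolding representable_signed_def by simp

theorem theorem5p16:
  fixes E m :: nat and x x' :: fp and l :: int
  assumes "E \<ge> 1" and "m \<ge> 1"
    and "is_float E m x" and "is_float E m x'"
    and "0 \<le> fval E m x" and "fval E m x \<le> 1"
    and "0 \<le> fval E m x'" and "fval E m x' \<le> 1"
    and "0 < fval E m x - fval E m x'" and "fval E m x - fval E m x' < 1"
    and "l \<ge> 1"
  shows "case Pre1 E m x x' of (n1, n2, nhi, nlo, b1, b2, ghi, glo) \<Rightarrow>
           0 \<le> ghi \<and> ghi < 2 ^ nat nhi \<and> 0 \<le> glo \<and> glo < 2 ^ nat nlo \<and>
           fval E m x - fval E m x' = bin_val (Pre1 E m x x') \<and>
           (\<exists>d. concise_bin_exp (fval E m x - fval E m x') d) \<and>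
           (\<forall>d. concise_bin_exp (fval E m x - fval E m x') d \<longrightarrow>
                  d (nat l) = ExtractBit (Pre1 E m x x') l) \<and>
           (\<forall>v \<in> set (Pre1_trace E m x x'). representable_signed (1 + E + m) v) \<and>
           (\<forall>v \<in> set (ExtractBit_trace (Pre1 E m x x') l). representable_signed (1 + E + m) v)"
proof -
  interpret pre1_setting E m x x'
    using assms by unfold_locales auto
  have digit: "d (nat l) = ExtractBit (Pre1 E m x x') l"
    if "concise_bin_exp (fval E m x - fval E m x') d" for d
    using concise_bin_exp_digit[OF that] ExtractBit_Pre1 assms(11) by simp
  have "concise_bin_exp (fval E m x - fval E m x') (\<lambda>k. \<lfloor>2^k * (fval E m x - fval E m x')\<rfloor> mod 2)"
    using assms(9,10) by (intro concise_bin_exp_floor_digits) simp_all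
  then show ?thesis
    using ghi_bounds glo_bounds diff_eq_bin_val digit Pre1_trace_bounded ExtractBit_trace_bounded
    unfolding Pre1_eq prod.case representable_signed_iff by blast
qed

end
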